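(* Let $\mathbb{F}$ be a field and let $q\in\mathbb{F}$ be a root of unity with $q\neq 1$; let $p\geq 2$ be the least positive integer with $q^p=1$. Let $\mathcal{H}$ be the unital associative $\mathbb{F}$-algebra generated by $A,B$ subject to $AB-qBA=I$, with $[f,g]=fg-gf$ and $\Lambda:=AB-BA$. Call an element of $\mathcal{H}$ a "special basis element" if it is of the form $B^m\Lambda^n$ or $\Lambda^nA^m$ with $m,n$ positive integers both congruent to $0$ modulo $p$. Then for every $m,k\in\mathbb{N}$ and every $n,l\in\mathbb{Z}^+$, each of the commutators $$[\Lambda^m,\Lambda^kA^l],\quad [\Lambda^m,B^l\Lambda^k],\quad [\Lambda^mA^n,\Lambda^kA^l],\quad [\Lambda^mA^n,B^l\Lambda^k]\ \ (n\neq l),\quad [B^n\Lambda^m,B^l\Lambda^k],$$ when expanded as a linear combination of the basis $\{\Lambda^k,\ \Lambda^kA^l,\ B^l\Lambda^k : k\in\mathbb{N},\ l\in\mathbb{Z}^+\}$ of $\mathcal{H}$, has coefficient zero at every special basis element.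
   Context: $\mathbb{N}$ denotes the nonnegative integers, $\mathbb{Z}^+$ the positive integers, $f^0=I$. The elements $\Lambda^k$, $\Lambda^kA^l$, $B^l\Lambda^k$ ($k\in\mathbb{N}$, $l\in\mathbb{Z}^+$) form a basis of $\mathcal{H}$. *)

theory Defs
  imports Main "HOL-Library.Function_Algebras"
begin

(* The free unital associative algebra F<A,B>: an element is a function from words
   (lists over bool; False = A, True = B) to coefficients.  Only finitely supported
   elements are ever built below.  Additive structure is the pointwise one of
   Function_Algebras; the (noncommutative) product is the convolution on words. *)

type_synonym 'k fa = "bool list \<Rightarrow> 'k"

definition fa_mult :: "'k::comm_ring_1 fa \<Rightarrow> 'k fa \<Rightarrow> 'k fa" (infixl "\<odot>" 70) where
  "f \<odot> g = (\<lambda>w. \<Sum>i\<le>length w. f (take i w) * g (drop i w))"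

definition fa_mon :: "'k::comm_ring_1 \<Rightarrow> bool list \<Rightarrow> 'k fa" where
  "fa_mon c u = (\<lambda>w. if w = u then c else 0)"

definition fa_smult :: "'k::comm_ring_1 \<Rightarrow> 'k fa \<Rightarrow> 'k fa" where
  "fa_smult c f = (\<lambda>w. c * f w)"

definition fa_I :: "'k::comm_ring_1 fa" where "fa_I = fa_mon 1 []"
definition fa_A :: "'k::comm_ring_1 fa" where "fa_A = fa_mon 1 [False]"
definition fa_B :: "'k::comm_ring_1 fa" where "fa_B = fa_mon 1 [True]"

fun fa_pow :: "'k::comm_ring_1 fa \<Rightarrow> nat \<Rightarrow> 'k fa" where
  "fa_pow f 0 = fa_I"
| "fa_pow f (Suc n) = f \<odot> fa_pow f n"

definition fa_rel :: "'k::field \<Rightarrow> 'k fa" where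
  "fa_rel q = fa_A \<odot> fa_B - fa_smult q (fa_B \<odot> fa_A) - fa_I"

inductive_set heis_ideal :: "'k::field \<Rightarrow> 'k fa set" for q :: "'k" where
  zero: "(\<lambda>_. 0) \<in> heis_ideal q"
| gen: "fa_smult c (fa_mon 1 u \<odot> fa_rel q \<odot> fa_mon 1 v) \<in> heis_ideal q"
| add: "x \<in> heis_ideal q \<Longrightarrow> y \<in> heis_ideal q \<Longrightarrow> x + y \<in> heis_ideal q"

definition heis_eq :: "'k::field \<Rightarrow> 'k fa \<Rightarrow> 'k fa \<Rightarrow> bool" where
  "heis_eq q x y \<longleftrightarrow> x - y \<in> heis_ideal q"

definition fa_comm :: "'k::comm_ring_1 fa \<Rightarrow> 'k fa \<Rightarrow> 'k fa" where
  "fa_comm f g = f \<odot> g - g \<odot> f"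

definition fa_Lam :: "'k::comm_ring_1 fa" where
  "fa_Lam = fa_A \<odot> fa_B - fa_B \<odot> fa_A"

datatype hbasis = BLam nat | BLamA nat nat | BBLam nat nat

fun hb_valid :: "hbasis \<Rightarrow> bool" where
  "hb_valid (BLam k) = True"
| "hb_valid (BLamA k l) = (0 < l)"
| "hb_valid (BBLam l k) = (0 < l)"

fun hb_elem :: "hbasis \<Rightarrow> 'k::comm_ring_1 fa" where
  "hb_elem (BLam k) = fa_pow fa_Lam k"
| "hb_elem (BLamA k l) = fa_pow fa_Lam k \<odot> fa_pow fa_A l"
| "hb_elem (BBLam l k) = fa_pow fa_B l \<odot> fa_pow fa_Lam k"

fun hb_special :: "nat \<Rightarrow> hbasis \<Rightarrow> bool" where
  "hb_special p (BLam k) = False"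
| "hb_special p (BLamA n m) = (0 < n \<and> 0 < m \<and> p dvd n \<and> p dvd m)"
| "hb_special p (BBLam m n) = (0 < n \<and> 0 < m \<and> p dvd n \<and> p dvd m)"

definition is_expansion :: "'k::field \<Rightarrow> 'k fa \<Rightarrow> (hbasis \<Rightarrow> 'k) \<Rightarrow> bool" where
  "is_expansion q x c \<longleftrightarrow> finite {b. c b \<noteq> 0} \<and> (\<forall>b. c b \<noteq> 0 \<longrightarrow> hb_valid b) \<and>
     heis_eq q x (\<Sum>b\<in>{b. c b \<noteq> 0}. fa_smult (c b) (hb_elem b))"

definition special_coeffs_zero :: "'k::field \<Rightarrow> nat \<Rightarrow> 'k fa \<Rightarrow> bool" where
  "special_coeffs_zero q p x \<longleftrightarrow>
     (\<forall>c. is_expansion q x c \<longrightarrow> (\<forall>b. hb_special p b \<longrightarrow> c b = 0))"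

end

theory Submission
  imports Defs "HOL-Computational_Algebra.Formal_Power_Series"
begin

(*
  For every special basis element b we construct a linear functional on the free algebra
  F<A,B> that vanishes on the defining ideal, is a trace (it takes the same value on uv and
  on vu), and is 1 on b and 0 on all other basis elements.  Pairing it with an expansion of
  a commutator [x,y] shows that the coefficient at b is 0.

  For b = Lambda^n A^m the functional comes from the representation of H in the skew power
  series ring F[[X]][t, t^-1] with t f(X) = f(qX) t, sending A to t and B to g(X) t^-1,
  where g = (X - 1)/(q - 1): it is the coefficient of X^n t^m.  The relation AB - qBA goes
  to 1, Lambda goes to X, so Lambda^k A^l goes to X^k t^l while B^l Lambda^k has negative
  t-degree; and X^n t^m is central when p divides n and m, which makes the coefficient a
  trace.  For b = B^m Lambda^n we compose with the anti-automorphism that reverses words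
  and exchanges A and B; it fixes the relation and Lambda.
*)

unbundle fps_syntax

subsection \<open>Finitely supported elements and functionals on words\<close>

definition fa_supp :: "'k::comm_ring_1 fa \<Rightarrow> bool list set" where
  "fa_supp x = {w. x w \<noteq> 0}"

definition fa_pair :: "(bool list \<Rightarrow> 'k) \<Rightarrow> 'k::comm_ring_1 fa \<Rightarrow> 'k" where
  "fa_pair c x = (\<Sum>w\<in>fa_supp x. x w * c w)"

lemma fa_pair_eq_sum:
  assumes "finite S" "fa_supp x \<subseteq> S"
  shows "fa_pair c x = (\<Sum>w\<in>S. x w * c w)"
  unfolding fa_pair_def
  by (rule sum.mono_neutral_left) (use assms in \<open>auto simp: fa_supp_def\<close>)

lemma fa_pair_eq_0: "(\<And>w. w \<in> fa_supp x \<Longrightarrow> c w = 0) \<Longrightarrow> fa_pair c x = 0"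
  by (simp add: fa_pair_def)

lemma fa_supp_0 [simp]: "fa_supp 0 = {}"
  by (simp add: fa_supp_def)

lemma fa_pair_0 [simp]: "fa_pair c 0 = 0"
  by (simp add: fa_pair_def)

lemma fa_pair_diff_fun: "fa_pair (\<lambda>w. c w - c' w) x = fa_pair c x - fa_pair c' x"
  by (simp add: fa_pair_def sum_subtractf right_diff_distrib)

lemma fa_supp_mult: "fa_supp (x \<odot> y) \<subseteq> (\<lambda>(u, v). u @ v) ` (fa_supp x \<times> fa_supp y)"
proof
  fix w assume "w \<in> fa_supp (x \<odot> y)"
  then have "(\<Sum>i\<le>length w. x (take i w) * y (drop i w)) \<noteq> 0"
    by (simp add: fa_supp_def fa_mult_def)
  then obtain i where "x (take i w) * y (drop i w) \<noteq> 0"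
    using sum.not_neutral_contains_not_neutral by blast
  then have "(take i w, drop i w) \<in> fa_supp x \<times> fa_supp y"
    by (auto simp: fa_supp_def)
  then show "w \<in> (\<lambda>(u, v). u @ v) ` (fa_supp x \<times> fa_supp y)"
    by (metis (no_types, lifting) append_take_drop_id case_prod_conv image_iff)
qed

lemma finite_fa_supp_add [simp]:
  "finite (fa_supp x) \<Longrightarrow> finite (fa_supp y) \<Longrightarrow> finite (fa_supp (x + y))"
  by (rule finite_subset[of _ "fa_supp x \<union> fa_supp y"]) (auto simp: fa_supp_def)

lemma finite_fa_supp_diff [simp]:
  "finite (fa_supp x) \<Longrightarrow> finite (fa_supp y) \<Longrightarrow> finite (fa_supp (x - y))"
  by (rule finite_subset[of _ "fa_supp x \<union> fa_supp y"]) (auto simp: fa_supp_def)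

lemma finite_fa_supp_smult [simp]: "finite (fa_supp x) \<Longrightarrow> finite (fa_supp (fa_smult a x))"
  by (rule finite_subset[of _ "fa_supp x"]) (auto simp: fa_supp_def fa_smult_def)

lemma finite_fa_supp_mon [simp]: "finite (fa_supp (fa_mon a u))"
  by (rule finite_subset[of _ "{u}"]) (auto simp: fa_supp_def fa_mon_def)

lemma finite_fa_supp_mult [simp]:
  "finite (fa_supp x) \<Longrightarrow> finite (fa_supp y) \<Longrightarrow> finite (fa_supp (x \<odot> y))"
  by (rule finite_subset[OF fa_supp_mult]) auto

lemma finite_fa_supp_sum [simp]:
  "(\<And>i. i \<in> I \<Longrightarrow> finite (fa_supp (f i))) \<Longrightarrow> finite (fa_supp (\<Sum>i\<in>I. f i))"
  by (induction I rule: infinite_finite_induct) simp_all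

lemma finite_fa_supp_pow [simp]: "finite (fa_supp f) \<Longrightarrow> finite (fa_supp (fa_pow f n))"
  by (induction n) (simp_all add: fa_I_def)

lemma finite_fa_supp_Lam [simp]: "finite (fa_supp fa_Lam)"
  by (simp add: fa_Lam_def fa_A_def fa_B_def)

lemma finite_fa_supp_rel [simp]: "finite (fa_supp (fa_rel q))"
  by (simp add: fa_rel_def fa_A_def fa_B_def fa_I_def)

lemma finite_fa_supp_hb_elem [simp]: "finite (fa_supp (hb_elem b))"
  by (cases b) (simp_all add: fa_A_def fa_B_def)

lemma fa_pair_add:
  "finite (fa_supp x) \<Longrightarrow> finite (fa_supp y) \<Longrightarrow> fa_pair c (x + y) = fa_pair c x + fa_pair c y"
  by (subst (1 2 3) fa_pair_eq_sum[where S = "fa_supp x \<union> fa_supp y"])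
     (auto simp: fa_supp_def sum.distrib distrib_right)

lemma fa_pair_diff:
  "finite (fa_supp x) \<Longrightarrow> finite (fa_supp y) \<Longrightarrow> fa_pair c (x - y) = fa_pair c x - fa_pair c y"
  by (subst (1 2 3) fa_pair_eq_sum[where S = "fa_supp x \<union> fa_supp y"])
     (auto simp: fa_supp_def sum_subtractf left_diff_distrib)

lemma fa_pair_smult: "finite (fa_supp x) \<Longrightarrow> fa_pair c (fa_smult a x) = a * fa_pair c x"
  by (subst (1 2) fa_pair_eq_sum[where S = "fa_supp x"])
     (auto simp: fa_supp_def fa_smult_def sum_distrib_left mult.assoc)

lemma fa_pair_mon [simp]: "fa_pair c (fa_mon a u) = a * c u"
  by (subst fa_pair_eq_sum[where S = "{u}"]) (auto simp: fa_supp_def fa_mon_def)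

lemma fa_pair_sum:
  "(\<And>i. i \<in> I \<Longrightarrow> finite (fa_supp (f i))) \<Longrightarrow> fa_pair c (\<Sum>i\<in>I. f i) = (\<Sum>i\<in>I. fa_pair c (f i))"
  by (induction I rule: infinite_finite_induct) (simp_all add: fa_pair_add)

lemma sum_fun_apply: "(\<Sum>i\<in>I. f i) w = (\<Sum>i\<in>I. f i w)"
  by (induction I rule: infinite_finite_induct) auto

lemma fa_sum_mon: "finite (fa_supp x) \<Longrightarrow> (\<Sum>u\<in>fa_supp x. fa_mon (x u) u) = x"
  by (rule ext) (auto simp: sum_fun_apply fa_mon_def fa_supp_def)

lemma fa_mult_sum_left: "(\<Sum>i\<in>I. f i) \<odot> y = (\<Sum>i\<in>I. f i \<odot> y)"
  by (rule ext) (simp add: fa_mult_def sum_fun_apply sum_distrib_right sum.swap[of _ I])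

lemma fa_mult_sum_right: "x \<odot> (\<Sum>i\<in>I. g i) = (\<Sum>i\<in>I. x \<odot> g i)"
  by (rule ext) (simp add: fa_mult_def sum_fun_apply sum_distrib_left sum.swap[of _ I])

lemma fa_mon_mult: "fa_mon a u \<odot> fa_mon b v = fa_mon (a * b) (u @ v)"
proof
  fix w
  have "(fa_mon a u \<odot> fa_mon b v) w = (\<Sum>i\<le>length w. if i = length u \<and> w = u @ v then a * b else 0)"
    unfolding fa_mult_def fa_mon_def
    by (rule sum.cong) (auto simp: append_eq_conv_conj)
  also have "\<dots> = fa_mon (a * b) (u @ v) w"
    by (auto simp: fa_mon_def)
  finally show "(fa_mon a u \<odot> fa_mon b v) w = fa_mon (a * b) (u @ v) w" .
qed

lemma fa_pair_mult_sum:
  assumes "finite (fa_supp x)" "finite (fa_supp y)"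
  shows "fa_pair c (x \<odot> y) = (\<Sum>u\<in>fa_supp x. \<Sum>v\<in>fa_supp y. x u * y v * c (u @ v))"
proof -
  have "x \<odot> y = (\<Sum>u\<in>fa_supp x. fa_mon (x u) u) \<odot> (\<Sum>v\<in>fa_supp y. fa_mon (y v) v)"
    by (simp only: fa_sum_mon assms)
  also have "\<dots> = (\<Sum>u\<in>fa_supp x. \<Sum>v\<in>fa_supp y. fa_mon (x u * y v) (u @ v))"
    by (simp only: fa_mult_sum_left) (simp add: fa_mult_sum_right fa_mon_mult)
  finally show ?thesis
    by (simp add: fa_pair_sum)
qed

lemma fa_pair_mult:
  assumes "finite (fa_supp x)" "finite (fa_supp y)"
  shows "fa_pair c (x \<odot> y) = fa_pair (\<lambda>u. fa_pair (\<lambda>v. c (u @ v)) y) x"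
  unfolding fa_pair_mult_sum[OF assms] by (simp add: fa_pair_def sum_distrib_left mult.assoc)

lemma fa_pow_A: "fa_pow fa_A l = fa_mon 1 (replicate l False)"
  by (induction l) (simp_all add: fa_I_def fa_A_def fa_mon_mult)

lemma fa_pow_B: "fa_pow fa_B l = fa_mon 1 (replicate l True)"
  by (induction l) (simp_all add: fa_I_def fa_B_def fa_mon_mult)

lemma fa_Lam_mon: "fa_Lam = fa_mon 1 [False, True] - fa_mon 1 [True, False]"
  by (simp add: fa_Lam_def fa_A_def fa_B_def fa_mon_mult)

lemma fa_pair_Lam: "fa_pair c fa_Lam = c [False, True] - c [True, False]"
  by (simp add: fa_Lam_mon fa_pair_diff)

lemma fa_pair_Lam_mult:
  "finite (fa_supp y) \<Longrightarrow>
     fa_pair c (fa_Lam \<odot> y) = fa_pair (\<lambda>v. c (False # True # v) - c (True # False # v)) y"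
  by (simp add: fa_pair_mult fa_pair_Lam fa_pair_diff_fun)

lemma fa_pair_mult_Lam:
  "finite (fa_supp x) \<Longrightarrow>
     fa_pair c (x \<odot> fa_Lam) = fa_pair (\<lambda>u. c (u @ [False, True]) - c (u @ [True, False])) x"
  by (simp add: fa_pair_mult fa_pair_Lam)

lemma fa_pair_Lam_pow_mult_Lam:
  "fa_pair c (fa_pow fa_Lam k \<odot> fa_Lam) = fa_pair c (fa_pow fa_Lam (Suc k))"
proof (induction k arbitrary: c)
  case 0
  then show ?case by (simp add: fa_pair_mult fa_I_def)
next
  case (Suc k)
  have "fa_pair c (fa_pow fa_Lam (Suc k) \<odot> fa_Lam)
      = fa_pair (\<lambda>v. c (False # True # v @ [False, True]) - c (False # True # v @ [True, False])
           - (c (True # False # v @ [False, True]) - c (True # False # v @ [True, False])))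
          (fa_pow fa_Lam k)"
    by (simp add: fa_pair_mult_Lam fa_pair_Lam_mult)
  also have "\<dots> = fa_pair (\<lambda>v. c (False # True # v) - c (True # False # v)) (fa_pow fa_Lam k \<odot> fa_Lam)"
    by (simp add: fa_pair_mult_Lam algebra_simps)
  also have "\<dots> = fa_pair (\<lambda>v. c (False # True # v) - c (True # False # v)) (fa_pow fa_Lam (Suc k))"
    by (rule Suc.IH)
  also have "\<dots> = fa_pair c (fa_pow fa_Lam (Suc (Suc k)))"
    by (simp add: fa_pair_Lam_mult)
  finally show ?case .
qed

subsection \<open>The anti-automorphism exchanging \<open>A\<close> and \<open>B\<close>\<close>

definition word_mirror :: "bool list \<Rightarrow> bool list" where
  "word_mirror w = rev (map Not w)"

lemma word_mirror_append [simp]: "word_mirror (u @ v) = word_mirror v @ word_mirror u"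
  by (simp add: word_mirror_def)

lemma word_mirror_Cons [simp]: "word_mirror (a # w) = word_mirror w @ [\<not> a]"
  by (simp add: word_mirror_def)

lemma word_mirror_Nil [simp]: "word_mirror [] = []"
  by (simp add: word_mirror_def)

lemma word_mirror_replicate [simp]: "word_mirror (replicate l a) = replicate l (\<not> a)"
  by (simp add: word_mirror_def)

lemma fa_pair_mirror_Lam_pow:
  "fa_pair (\<lambda>w. c (word_mirror w)) (fa_pow fa_Lam k) = fa_pair c (fa_pow fa_Lam k)"
proof (induction k arbitrary: c)
  case 0
  then show ?case by (simp add: fa_I_def)
next
  case (Suc k)
  have "fa_pair (\<lambda>w. c (word_mirror w)) (fa_pow fa_Lam (Suc k))
      = fa_pair (\<lambda>v. c (word_mirror v @ [False, True]) - c (word_mirror v @ [True, False]))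
          (fa_pow fa_Lam k)"
    by (simp add: fa_pair_Lam_mult)
  also have "\<dots> = fa_pair c (fa_pow fa_Lam k \<odot> fa_Lam)"
    using Suc.IH[of "\<lambda>v. c (v @ [False, True]) - c (v @ [True, False])"]
    by (simp add: fa_pair_mult_Lam)
  finally show ?case
    by (simp only: fa_pair_Lam_pow_mult_Lam)
qed

fun hb_mirror :: "hbasis \<Rightarrow> hbasis" where
  "hb_mirror (BLam k) = BLam k"
| "hb_mirror (BLamA k l) = BBLam l k"
| "hb_mirror (BBLam l k) = BLamA k l"

lemma fa_pair_mirror_hb_elem:
  "fa_pair (\<lambda>w. c (word_mirror w)) (hb_elem b) = fa_pair c (hb_elem (hb_mirror b))"
proof (cases b)
  case (BLam k)
  then show ?thesis by (simp add: fa_pair_mirror_Lam_pow)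
next
  case (BLamA k l)
  then show ?thesis
    using fa_pair_mirror_Lam_pow[of "\<lambda>u. c (replicate l True @ u)" k]
    by (simp add: fa_pair_mult fa_pow_A fa_pow_B)
next
  case (BBLam l k)
  then show ?thesis
    using fa_pair_mirror_Lam_pow[of "\<lambda>u. c (u @ replicate l False)" k]
    by (simp add: fa_pair_mult fa_pow_A fa_pow_B)
qed

subsection \<open>Functionals vanishing on the defining ideal\<close>

definition kills_relation :: "'k::field \<Rightarrow> (bool list \<Rightarrow> 'k) \<Rightarrow> bool" where
  "kills_relation q c \<longleftrightarrow>
     (\<forall>u v. c (u @ [False, True] @ v) - q * c (u @ [True, False] @ v) = c (u @ v))"

lemma kills_relation_mirror:
  "kills_relation q c \<Longrightarrow> kills_relation q (\<lambda>w. c (word_mirror w))"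
  by (simp add: kills_relation_def)

lemma finite_fa_supp_heis_ideal: "x \<in> heis_ideal q \<Longrightarrow> finite (fa_supp x)"
proof (induction rule: heis_ideal.induct)
  case (add x y)
  from add.IH show ?case by (rule finite_fa_supp_add)
qed (simp_all add: fa_supp_def[of "\<lambda>_. 0"])

lemma fa_pair_heis_ideal:
  assumes "x \<in> heis_ideal q" "kills_relation q c"
  shows "fa_pair c x = 0"
  using assms(1)
proof (induction rule: heis_ideal.induct)
  case zero
  then show ?case by (simp add: fa_pair_def fa_supp_def)
next
  case (gen a u v)
  have "fa_pair c (fa_mon 1 u \<odot> fa_rel q \<odot> fa_mon 1 v)
      = c (u @ [False, True] @ v) - q * c (u @ [True, False] @ v) - c (u @ v)"
    by (simp add: fa_pair_mult fa_rel_def fa_A_def fa_B_def fa_I_def fa_mon_mult fa_pair_diff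
        fa_pair_smult)
  then show ?case
    using assms(2) by (simp add: fa_pair_smult kills_relation_def)
next
  case (add x y)
  then show ?case
    by (simp only: fa_pair_add finite_fa_supp_heis_ideal add_0)
qed

definition is_trace :: "(bool list \<Rightarrow> 'k) \<Rightarrow> bool" where
  "is_trace c \<longleftrightarrow> (\<forall>u v. c (u @ v) = c (v @ u))"

lemma is_trace_mirror: "is_trace c \<Longrightarrow> is_trace (\<lambda>w. c (word_mirror w))"
  by (simp add: is_trace_def)

lemma fa_pair_comm_trace:
  assumes "is_trace c" "finite (fa_supp x)" "finite (fa_supp y)"
  shows "fa_pair c (fa_comm x y) = 0"
proof -
  have "fa_pair c (x \<odot> y) = fa_pair c (y \<odot> x)"
    using assms
    by (simp add: fa_pair_mult_sum is_trace_def sum.swap[of _ "fa_supp x"] mult.commute)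
  then show ?thesis
    using assms by (simp add: fa_comm_def fa_pair_diff)
qed

lemma expansion_coeff_eq_0_if_dual_trace:
  assumes "kills_relation q c" "is_trace c"
    and dual: "\<And>b'. hb_valid b' \<Longrightarrow> fa_pair c (hb_elem b') = (if b' = b then 1 else 0)"
    and "finite (fa_supp x)" "finite (fa_supp y)"
    and "is_expansion q (fa_comm x y) e"
  shows "e b = 0"
proof -
  let ?B = "{b. e b \<noteq> 0}"
  let ?S = "\<Sum>b\<in>?B. fa_smult (e b) (hb_elem b)"
  have fin: "finite ?B" and valid: "\<And>b. e b \<noteq> 0 \<Longrightarrow> hb_valid b"
    and ideal: "fa_comm x y - ?S \<in> heis_ideal q"
    using assms(6) by (auto simp: is_expansion_def heis_eq_def)
  have "0 = fa_pair c (fa_comm x y)"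
    using assms by (simp add: fa_pair_comm_trace)
  also have "\<dots> = fa_pair c ?S"
    using fa_pair_heis_ideal[OF ideal assms(1)] assms(4,5)
    by (simp add: fa_pair_diff fa_comm_def)
  also have "\<dots> = (\<Sum>b'\<in>?B. if b' = b then e b' else 0)"
    by (simp add: fa_pair_sum fa_pair_smult) (rule sum.cong, auto simp: dual valid)
  also have "\<dots> = e b"
    using fin by (simp add: sum.delta')
  finally show ?thesis ..
qed

subsection \<open>A representation in a skew power series ring\<close>

definition fps_dilate :: "'k::idom \<Rightarrow> 'k fps \<Rightarrow> 'k fps" where
  "fps_dilate t f = fps_compose f (fps_const t * fps_X)"

lemma fps_dilate_nth [simp]: "fps_dilate t f $ n = t ^ n * f $ n"
  by (simp add: fps_dilate_def)

lemma fps_dilate_mult: "fps_dilate t (f * g) = fps_dilate t f * fps_dilate t g"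
  by (simp add: fps_dilate_def fps_compose_mult_distrib)

lemma fps_dilate_dilate [simp]: "fps_dilate t (fps_dilate s f) = fps_dilate (t * s) f"
  by (rule fps_ext) (simp add: power_mult_distrib)

lemma fps_dilate_1 [simp]: "fps_dilate 1 f = f"
  by (rule fps_ext) simp

lemma fps_dilate_one [simp]: "fps_dilate t 1 = 1"
  by (rule fps_ext) simp

lemma fps_dilate_diff: "fps_dilate t (f - g) = fps_dilate t f - fps_dilate t g"
  by (rule fps_ext) (simp add: algebra_simps)

lemma fps_dilate_const_mult: "fps_dilate t (fps_const c * f) = fps_const c * fps_dilate t f"
  by (rule fps_ext) (simp add: algebra_simps)

lemma fps_mult_dilate_nth_swap:
  fixes f g :: "'k::idom fps"
  assumes "a * b = 1" "a ^ j = 1"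
  shows "(f * fps_dilate a g) $ j = (g * fps_dilate b f) $ j"
proof -
  have power_swap: "a ^ (j - i) = b ^ i" if "i \<le> j" for i
  proof -
    have "a ^ (j - i) = a ^ (j - i) * (a * b) ^ i"
      using assms(1) by simp
    also have "\<dots> = a ^ j * b ^ i"
      using that by (simp add: power_mult_distrib power_add[symmetric] mult.assoc)
    finally show ?thesis
      using assms(2) by simp
  qed
  have "(f * fps_dilate a g) $ j = (\<Sum>i=0..j. f $ i * (b ^ i * g $ (j - i)))"
    by (simp add: fps_mult_nth power_swap)
  also have "\<dots> = (\<Sum>i=0..j. f $ (j - i) * (b ^ (j - i) * g $ (j - (j - i))))"
    by (rule sum.atLeastAtMost_rev[where n = 0, simplified])
  also have "\<dots> = (\<Sum>i=0..j. g $ i * (b ^ (j - i) * f $ (j - i)))"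
    by (rule sum.cong) auto
  also have "\<dots> = (g * fps_dilate b f) $ j"
    by (simp add: fps_mult_nth)
  finally show ?thesis .
qed

fun word_deg :: "bool list \<Rightarrow> int" where
  "word_deg [] = 0"
| "word_deg (a # w) = (if a then word_deg w - 1 else word_deg w + 1)"

lemma word_deg_append [simp]: "word_deg (u @ v) = word_deg u + word_deg v"
  by (induction u) auto

lemma word_deg_replicate [simp]: "word_deg (replicate l a) = (if a then - int l else int l)"
  by (induction l) auto

definition series_B :: "'k::field \<Rightarrow> 'k fps" where
  "series_B q = fps_const (inverse (q - 1)) * (fps_X - 1)"

(* The image of the word w in the skew ring is word_series q w * t ^ word_deg w. *)
fun word_series :: "'k::field \<Rightarrow> bool list \<Rightarrow> 'k fps" where
  "word_series q [] = 1"
| "word_series q (a # w) =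
     (if a then series_B q * fps_dilate (inverse q) (word_series q w)
      else fps_dilate q (word_series q w))"

lemma word_series_append:
  assumes "q \<noteq> 0"
  shows "word_series q (u @ v) = word_series q u * fps_dilate (q powi word_deg u) (word_series q v)"
proof (induction u)
  case (Cons a u)
  have "q powi (word_deg u - 1) = inverse q * q powi word_deg u"
    and "q powi (word_deg u + 1) = q * q powi word_deg u"
    using assms by (simp_all add: power_int_diff power_int_add field_simps)
  with Cons show ?case
    by (simp add: fps_dilate_mult mult.assoc)
qed simp

lemma word_series_replicate_A [simp]: "word_series q (replicate l False) = 1"
  by (induction l) simp_all

lemma series_B_nth:
  "series_B q $ n = (if n = 0 then - inverse (q - 1) else if n = 1 then inverse (q - 1) else 0)"
  by (simp add: series_B_def fps_X_nth)

lemma series_B_relation: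
  assumes "q \<noteq> 1"
  shows "fps_dilate q (series_B q) - fps_const q * series_B q = 1"
proof (rule fps_ext)
  fix n
  have "q - 1 \<noteq> 0" using assms by simp
  then show "(fps_dilate q (series_B q) - fps_const q * series_B q) $ n = 1 $ n"
    by (auto simp: series_B_nth field_simps)
qed

lemma series_B_Lam:
  assumes "q \<noteq> 1"
  shows "fps_dilate q (series_B q) - series_B q = fps_X"
proof (rule fps_ext)
  fix n
  have "q - 1 \<noteq> 0" using assms by simp
  then show "(fps_dilate q (series_B q) - series_B q) $ n = fps_X $ n"
    by (auto simp: series_B_nth fps_X_nth field_simps)
qed

lemma word_series_AB:
  "q \<noteq> 0 \<Longrightarrow> word_series q (False # True # v) = fps_dilate q (series_B q) * word_series q v"
  by (simp add: fps_dilate_mult)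

lemma word_series_BA: "q \<noteq> 0 \<Longrightarrow> word_series q (True # False # v) = series_B q * word_series q v"
  by simp

lemma word_series_relation:
  assumes "q \<noteq> 0" "q \<noteq> 1"
  shows "word_series q (False # True # v) - fps_const q * word_series q (True # False # v)
           = word_series q v"
proof -
  have "word_series q (False # True # v) - fps_const q * word_series q (True # False # v)
      = (fps_dilate q (series_B q) - fps_const q * series_B q) * word_series q v"
    by (simp only: word_series_AB[OF assms(1)] word_series_BA[OF assms(1)] algebra_simps)
  then show ?thesis
    using series_B_relation[OF assms(2)] by simp
qed

lemma word_series_Lam:
  assumes "q \<noteq> 0" "q \<noteq> 1"
  shows "word_series q (False # True # v) - word_series q (True # False # v) = fps_X * word_series q v"
  using series_B_Lam[OF assms(2)]
  by (simp only: word_series_AB[OF assms(1)] word_series_BA[OF assms(1)] left_diff_distrib[symmetric])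

definition skew_coeff :: "'k::field \<Rightarrow> int \<Rightarrow> nat \<Rightarrow> bool list \<Rightarrow> 'k" where
  "skew_coeff q d j w = (if word_deg w = d then word_series q w $ j else 0)"

lemma kills_relation_skew_coeff:
  assumes "q \<noteq> 0" "q \<noteq> 1"
  shows "kills_relation q (skew_coeff q d j)"
  unfolding kills_relation_def
proof (intro allI)
  fix u v :: "bool list"
  let ?t = "q powi word_deg u"
  have "word_series q (u @ False # True # v) - fps_const q * word_series q (u @ True # False # v)
      = word_series q u * fps_dilate ?t
          (word_series q (False # True # v) - fps_const q * word_series q (True # False # v))"
    by (simp only: word_series_append[OF assms(1)] fps_dilate_diff fps_dilate_const_mult
        right_diff_distrib mult.left_commute)
  also have "\<dots> = word_series q (u @ v)"
    by (simp only: word_series_relation[OF assms] word_series_append[OF assms(1)])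
  finally have "word_series q (u @ False # True # v) $ j - q * word_series q (u @ True # False # v) $ j
      = word_series q (u @ v) $ j"
    by (metis fps_sub_nth fps_mult_left_const_nth)
  then show "skew_coeff q d j (u @ [False, True] @ v) - q * skew_coeff q d j (u @ [True, False] @ v)
      = skew_coeff q d j (u @ v)"
    by (simp add: skew_coeff_def)
qed

lemma power_int_eq_1_if_dvd:
  fixes q :: "'k::division_ring"
  assumes "q ^ p = 1" "int p dvd e"
  shows "q powi e = 1"
proof -
  obtain r where "e = int p * r"
    using assms(2) by blast
  then have "q powi e = (q ^ p) powi r"
    by (simp add: power_int_mult)
  then show ?thesis
    using assms(1) by simp
qed

lemma is_trace_skew_coeff:
  fixes q :: "'k::field"
  assumes "q \<noteq> 0" "q ^ p = 1" "p dvd j" "int p dvd d"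
  shows "is_trace (skew_coeff q d j)"
  unfolding is_trace_def
proof (intro allI)
  fix u v :: "bool list"
  let ?a = "q powi word_deg u" and ?b = "q powi word_deg v"
  show "skew_coeff q d j (u @ v) = skew_coeff q d j (v @ u)"
  proof (cases "word_deg u + word_deg v = d")
    case True
    have "?a * ?b = 1"
      using True assms power_int_eq_1_if_dvd[OF assms(2,4)] by (simp add: power_int_add[symmetric])
    moreover have "?a ^ j = 1"
      using assms(3) by (simp add: power_int_power' power_int_eq_1_if_dvd[OF assms(2)])
    ultimately have "(word_series q u * fps_dilate ?a (word_series q v)) $ j
        = (word_series q v * fps_dilate ?b (word_series q u)) $ j"
      by (rule fps_mult_dilate_nth_swap)
    then show ?thesis
      by (simp add: skew_coeff_def word_series_append[OF assms(1)] add.commute)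
  qed (simp add: skew_coeff_def add.commute)
qed

lemma skew_coeff_Lam_step:
  assumes "q \<noteq> 0" "q \<noteq> 1"
  shows "skew_coeff q d j (False # True # v) - skew_coeff q d j (True # False # v)
           = (if j = 0 then 0 else skew_coeff q d (j - 1) v)"
proof -
  have "word_series q (False # True # v) $ j - word_series q (True # False # v) $ j
      = (fps_X * word_series q v) $ j"
    by (metis word_series_Lam[OF assms] fps_sub_nth)
  then show ?thesis
    by (cases j) (simp_all add: skew_coeff_def fps_X_mult_nth)
qed

lemma fa_pair_skew_coeff_Lam_pow:
  assumes "q \<noteq> 0" "q \<noteq> 1"
  shows "fa_pair (skew_coeff q d j) (fa_pow fa_Lam k) = (if d = 0 \<and> j = k then 1 else 0)"
proof (induction k arbitrary: j)
  case 0
  then show ?case by (simp add: fa_I_def skew_coeff_def)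
next
  case (Suc k)
  have "fa_pair (skew_coeff q d j) (fa_pow fa_Lam (Suc k))
      = fa_pair (\<lambda>v. if j = 0 then 0 else skew_coeff q d (j - 1) v) (fa_pow fa_Lam k)"
    by (simp add: fa_pair_Lam_mult skew_coeff_Lam_step[OF assms])
  also have "\<dots> = (if d = 0 \<and> j = Suc k then 1 else 0)"
    using Suc.IH[of "j - 1"] by (cases j) (simp_all add: fa_pair_def)
  finally show ?case .
qed

lemma word_deg_Lam_pow: "w \<in> fa_supp (fa_pow fa_Lam k) \<Longrightarrow> word_deg w = 0"
proof (induction k arbitrary: w)
  case 0
  then show ?case by (simp add: fa_I_def fa_supp_def fa_mon_def split: if_splits)
next
  case (Suc k)
  have "fa_supp fa_Lam \<subseteq> {[False, True], [True, False]}"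
    by (auto simp: fa_Lam_mon fa_supp_def fa_mon_def)
  with Suc show ?case
    using fa_supp_mult[of fa_Lam "fa_pow fa_Lam k"] by fastforce
qed

lemma skew_coeff_append_A:
  "q \<noteq> 0 \<Longrightarrow> skew_coeff q d j (u @ replicate l False) = skew_coeff q (d - int l) j u"
  by (auto simp: skew_coeff_def word_series_append)

lemma fa_pair_skew_coeff_hb_elem:
  assumes "q \<noteq> 0" "q \<noteq> 1" "0 < m"
  shows "fa_pair (skew_coeff q (int m) n) (hb_elem b) = (if b = BLamA n m then 1 else 0)"
proof (cases b)
  case (BLam k)
  then show ?thesis
    using assms by (simp add: fa_pair_skew_coeff_Lam_pow)
next
  case (BLamA k l)
  then show ?thesis
    using assms by (auto simp: fa_pair_mult fa_pow_A skew_coeff_append_A fa_pair_skew_coeff_Lam_pow)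
next
  case (BBLam l k)
  have "fa_pair (\<lambda>v. skew_coeff q (int m) n (replicate l True @ v)) (fa_pow fa_Lam k) = 0"
    using assms(3) by (intro fa_pair_eq_0) (simp add: skew_coeff_def word_deg_Lam_pow)
  with BBLam show ?thesis
    by (simp add: fa_pair_mult fa_pow_B)
qed

lemma hb_mirror_eq_BLamA_iff: "hb_mirror b = BLamA n m \<longleftrightarrow> b = BBLam m n"
  by (cases b) auto

lemma expansion_coeff_Lam_pow_A_eq_0:
  fixes q :: "'k::field"
  assumes q: "q \<noteq> 0" "q \<noteq> 1" "q ^ p = 1" and "0 < m" "p dvd m" "p dvd n"
    and "finite (fa_supp x)" "finite (fa_supp y)" "is_expansion q (fa_comm x y) e"
  shows "e (BLamA n m) = 0"
proof (rule expansion_coeff_eq_0_if_dual_trace[where c = "skew_coeff q (int m) n"])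
  show "kills_relation q (skew_coeff q (int m) n)"
    using q(1,2) by (rule kills_relation_skew_coeff)
  show "is_trace (skew_coeff q (int m) n)"
    using assms by (intro is_trace_skew_coeff) auto
  show "fa_pair (skew_coeff q (int m) n) (hb_elem b') = (if b' = BLamA n m then 1 else 0)" for b'
    using q(1,2) \<open>0 < m\<close> by (rule fa_pair_skew_coeff_hb_elem)
qed (fact assms)+

lemma expansion_coeff_B_Lam_pow_eq_0:
  fixes q :: "'k::field"
  assumes q: "q \<noteq> 0" "q \<noteq> 1" "q ^ p = 1" and "0 < m" "p dvd m" "p dvd n"
    and "finite (fa_supp x)" "finite (fa_supp y)" "is_expansion q (fa_comm x y) e"
  shows "e (BBLam m n) = 0"
proof (rule expansion_coeff_eq_0_if_dual_trace[where c = "\<lambda>w. skew_coeff q (int m) n (word_mirror w)"])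
  show "kills_relation q (\<lambda>w. skew_coeff q (int m) n (word_mirror w))"
    using q by (intro kills_relation_mirror kills_relation_skew_coeff)
  show "is_trace (\<lambda>w. skew_coeff q (int m) n (word_mirror w))"
    using assms by (intro is_trace_mirror is_trace_skew_coeff) auto
  show "fa_pair (\<lambda>w. skew_coeff q (int m) n (word_mirror w)) (hb_elem b')
      = (if b' = BBLam m n then 1 else 0)" for b'
    using q \<open>0 < m\<close>
    by (simp add: fa_pair_mirror_hb_elem fa_pair_skew_coeff_hb_elem hb_mirror_eq_BLamA_iff)
qed (fact assms)+

theorem special_coeffs_zero_fa_comm:
  fixes q :: "'k::field"
  assumes "q \<noteq> 1" "0 < p" "q ^ p = 1" "finite (fa_supp x)" "finite (fa_supp y)"
  shows "special_coeffs_zero q p (fa_comm x y)"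
  unfolding special_coeffs_zero_def
proof (intro allI impI)
  fix e b
  assume "is_expansion q (fa_comm x y) e" and special: "hb_special p b"
  moreover have "q \<noteq> 0"
    using assms(2,3) by (metis power_0_left zero_neq_one gr_implies_not0)
  ultimately show "e b = 0"
    using assms
    by (cases b) (auto intro: expansion_coeff_Lam_pow_A_eq_0 expansion_coeff_B_Lam_pow_eq_0)
qed

theorem lemma1:
  fixes q :: "'k::field" and p m k n l :: nat
  assumes "q \<noteq> 1" and "0 < p" and "q ^ p = 1"
    and "\<forall>j. 0 < j \<and> j < p \<longrightarrow> q ^ j \<noteq> 1"
    and "0 < n" and "0 < l"
  shows "special_coeffs_zero q p (fa_comm (fa_pow fa_Lam m) (fa_pow fa_Lam k \<odot> fa_pow fa_A l))
       \<and> special_coeffs_zero q p (fa_comm (fa_pow fa_Lam m) (fa_pow fa_B l \<odot> fa_pow fa_Lam k))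
       \<and> special_coeffs_zero q p (fa_comm (fa_pow fa_Lam m \<odot> fa_pow fa_A n) (fa_pow fa_Lam k \<odot> fa_pow fa_A l))
       \<and> (n \<noteq> l \<longrightarrow> special_coeffs_zero q p
            (fa_comm (fa_pow fa_Lam m \<odot> fa_pow fa_A n) (fa_pow fa_B l \<odot> fa_pow fa_Lam k)))
       \<and> special_coeffs_zero q p (fa_comm (fa_pow fa_B n \<odot> fa_pow fa_Lam m) (fa_pow fa_B l \<odot> fa_pow fa_Lam k))"
  using assms(1-3)
  by (intro conjI impI special_coeffs_zero_fa_comm) (simp_all add: fa_A_def fa_B_def)

end
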